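(* Let $\mathfrak n$ be a non-singular 2-step nilpotent real Lie algebra with center $\mathfrak z$ such that $\dim\mathfrak n>3\dim\mathfrak z$. Then every closed 2-form $\omega$ on $\mathfrak n$ satisfies $\omega(Z,U)=0$ for all $Z\in\mathfrak z$ and $U\in\mathfrak n$.
   Context: A real Lie algebra $\mathfrak n$ is 2-step nilpotent if $[[U,V],W]=0$ for all $U,V,W$ and $\mathfrak n$ is not abelian. It is non-singular if for every $X\in\mathfrak n\setminus\mathfrak z$ the map $\mathrm{ad}(X):\mathfrak n\to\mathfrak z$, $Y\mapsto[X,Y]$, is onto $\mathfrak z$. A 2-form on $\mathfrak n$ is an alternating bilinear form $\omega$ on $\mathfrak n$; it is closed iff $\omega([U,V],W)+\omega([V,W],U)+\omega([W,U],V)=0$ for all $U,V,W\in\mathfrak n$. *)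

theory Defs
  imports "HOL-Analysis.Analysis"
begin

text \<open>A finite-dimensional real Lie algebra is modelled as a Euclidean space type
  (a finite-dimensional real vector space) with a bracket operation.\<close>

definition lie_algebra :: "('a::real_vector \<Rightarrow> 'a \<Rightarrow> 'a) \<Rightarrow> bool" where
  "lie_algebra br \<longleftrightarrow> bilinear br \<and> (\<forall>x. br x x = 0) \<and>
     (\<forall>x y z. br x (br y z) + br y (br z x) + br z (br x y) = 0)"

definition lie_center :: "('a::real_vector \<Rightarrow> 'a \<Rightarrow> 'a) \<Rightarrow> 'a set" where
  "lie_center br = {X. \<forall>Y. br X Y = 0}"

definition two_step_nilpotent :: "('a::real_vector \<Rightarrow> 'a \<Rightarrow> 'a) \<Rightarrow> bool" where
  "two_step_nilpotent br \<longleftrightarrow> lie_algebra br \<and> (\<forall>U V W. br (br U V) W = 0) \<and>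
     \<not> (\<forall>U V. br U V = 0)"

definition nonsingular :: "('a::real_vector \<Rightarrow> 'a \<Rightarrow> 'a) \<Rightarrow> bool" where
  "nonsingular br \<longleftrightarrow> (\<forall>X. X \<notin> lie_center br \<longrightarrow> range (br X) = lie_center br)"

definition two_form :: "('a::real_vector \<Rightarrow> 'a \<Rightarrow> real) \<Rightarrow> bool" where
  "two_form \<omega> \<longleftrightarrow> bilinear \<omega> \<and> (\<forall>x. \<omega> x x = 0)"

definition closed_form :: "('a::real_vector \<Rightarrow> 'a \<Rightarrow> 'a) \<Rightarrow> ('a \<Rightarrow> 'a \<Rightarrow> real) \<Rightarrow> bool" where
  "closed_form br \<omega> \<longleftrightarrow>
     (\<forall>U V W. \<omega> (br U V) W + \<omega> (br V W) U + \<omega> (br W U) V = 0)"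

end

theory Submission
  imports Defs
begin

text \<open>Fix \<open>U\<close> and let \<open>C\<close> be its centralizer. For \<open>V, V' \<in> C\<close> the closedness identity for
  \<open>(V, V', U)\<close> reduces to \<open>\<omega>([V,V'],U) = 0\<close>, so it suffices that \<open>[C,C]\<close> spans \<open>\<zz>\<close>.
  Otherwise some \<open>w \<noteq> 0\<close> in \<open>\<zz>\<close> is orthogonal to \<open>[C,C]\<close>. Then \<open>C\<close> is isotropic for the bilinear
  form \<open>(V,W) \<mapsto> \<langle>w,[V,W]\<rangle>\<close>, whose left radical lies in \<open>\<zz>\<close> by non-singularity, so
  \<open>2 dim C \<le> dim \<nn> + dim \<zz>\<close>. Since also \<open>dim C \<ge> dim \<nn> - dim \<zz>\<close>, this forces
  \<open>dim \<nn> \<le> 3 dim \<zz>\<close>.\<close>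

lemma dim_le_dim_image_add_dim_kernel:
  fixes f :: "'a::euclidean_space \<Rightarrow> 'b::euclidean_space"
  assumes f: "linear f" and S: "subspace S"
  shows "dim S \<le> dim (f ` S) + dim (S \<inter> {x. f x = 0})"
proof -
  define K where "K = S \<inter> {x. f x = 0}"
  have K: "subspace K"
    unfolding K_def by (intro subspace_inter S linear_subspace_kernel f)
  define J where "J = {y \<in> S. \<forall>x\<in>K. orthogonal x y}"
  have dim_J_K: "dim J + dim K = dim S"
    unfolding J_def using dim_subspace_orthogonal_to_vectors[OF K S] K_def by auto
  have J: "subspace J"
    unfolding J_def using S by (auto simp: subspace_def orthogonal_clauses)
  have inj: "inj_on f J"
  proof (rule inj_onI)
    fix x y assume xy: "x \<in> J" "y \<in> J" "f x = f y"
    then have "x - y \<in> J" "f (x - y) = 0"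
      using J f by (simp_all add: subspace_diff linear_diff)
    then have "orthogonal (x - y) (x - y)"
      unfolding J_def K_def by auto
    then show "x = y" by (simp add: orthogonal_def)
  qed
  have "span J = J"
    using J by (simp add: span_eq_iff)
  with inj have "dim (f ` J) = dim J"
    using dim_image_eq[OF f] by metis
  moreover have "dim (f ` J) \<le> dim (f ` S)"
    by (rule dim_subset) (auto simp: J_def)
  ultimately show ?thesis
    using dim_J_K unfolding K_def by linarith
qed

lemma bilinear_inner_representation:
  fixes f :: "'a::real_vector \<Rightarrow> 'b::euclidean_space \<Rightarrow> real"
  assumes f: "bilinear f"
  obtains L where "linear L" "\<And>x y. f x y = L x \<bullet> y"
proof -
  define L where "L x = (\<Sum>b\<in>Basis. f x b *\<^sub>R b)" for x
  have "linear L"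
    by (rule linearI) (simp_all add: L_def bilinear_ladd[OF f] bilinear_lmul[OF f]
        scaleR_add_left sum.distrib scaleR_sum_right)
  moreover have "f x y = L x \<bullet> y" for x y
  proof -
    have lin: "linear (f x)" using f by (simp add: bilinear_def)
    have "f x y = f x (\<Sum>b\<in>Basis. (y \<bullet> b) *\<^sub>R b)"
      by (simp add: euclidean_representation)
    also have "\<dots> = (\<Sum>b\<in>Basis. f x b * (y \<bullet> b))"
      by (simp add: linear_sum[OF lin] linear_scale[OF lin] mult.commute)
    also have "\<dots> = L x \<bullet> y"
      unfolding L_def inner_sum_left by (simp add: inner_commute)
    finally show ?thesis .
  qed
  ultimately show thesis by (rule that)
qed

lemma dim_isotropic_subspace_le:
  fixes f :: "'a::euclidean_space \<Rightarrow> 'a \<Rightarrow> real"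
  assumes f: "bilinear f" and C: "subspace C"
    and isotropic: "\<And>x y. x \<in> C \<Longrightarrow> y \<in> C \<Longrightarrow> f x y = 0"
  shows "2 * dim C \<le> DIM('a) + dim {x \<in> C. \<forall>y. f x y = 0}"
proof -
  obtain L where L: "linear L" and f_L: "\<And>x y. f x y = L x \<bullet> y"
    using bilinear_inner_representation[OF f] by blast
  have radical: "{x \<in> C. \<forall>y. f x y = 0} = C \<inter> {x. L x = 0}"
    by (auto simp: f_L)
  have "L ` C \<subseteq> {y \<in> UNIV. \<forall>x\<in>C. orthogonal x y}"
    using isotropic by (auto simp: f_L orthogonal_def inner_commute)
  then have "dim (L ` C) \<le> dim {y \<in> UNIV. \<forall>x\<in>C. orthogonal x y}"
    by (rule dim_subset)
  moreover have "dim {y \<in> UNIV. \<forall>x\<in>C. orthogonal x y} + dim C = DIM('a)"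
    using dim_subspace_orthogonal_to_vectors[OF C subspace_UNIV] by simp
  moreover have "dim C \<le> dim (L ` C) + dim (C \<inter> {x. L x = 0})"
    by (rule dim_le_dim_image_add_dim_kernel[OF L C])
  ultimately show ?thesis
    unfolding radical by linarith
qed

definition centralizer :: "('a::real_vector \<Rightarrow> 'a \<Rightarrow> 'a) \<Rightarrow> 'a \<Rightarrow> 'a set" where
  "centralizer br U = {V. br U V = 0}"

lemma lie_bracket_antisym:
  assumes "lie_algebra br"
  shows "br y x = - br x y"
proof -
  have bilinear: "bilinear br" and alternating: "\<And>x. br x x = 0"
    using assms by (simp_all add: lie_algebra_def)
  have "0 = br (x + y) (x + y)" using alternating by simp
  also have "\<dots> = br x y + br y x"
    unfolding bilinear_ladd[OF bilinear] bilinear_radd[OF bilinear] using alternating by simp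
  finally show ?thesis by (metis add.commute eq_neg_iff_add_eq_0)
qed

lemma subspace_lie_center:
  assumes "bilinear br"
  shows "subspace (lie_center br)"
  using assms unfolding lie_center_def subspace_def
  by (auto simp: bilinear_ladd bilinear_lmul bilinear_lzero)

lemma subspace_centralizer:
  assumes "bilinear br"
  shows "subspace (centralizer br U)"
  using assms unfolding centralizer_def bilinear_def by (blast intro: linear_subspace_kernel)

lemma dim_centralizer_ge:
  fixes br :: "'a::euclidean_space \<Rightarrow> 'a \<Rightarrow> 'a"
  assumes br: "bilinear br" and nonsingular: "nonsingular br"
  shows "DIM('a) \<le> dim (lie_center br) + dim (centralizer br U)"
proof (cases "U \<in> lie_center br")
  case True
  then have "centralizer br U = UNIV"
    by (simp add: centralizer_def lie_center_def)
  then show ?thesis by simp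
next
  case False
  have "linear (br U)" using br by (simp add: bilinear_def)
  from dim_le_dim_image_add_dim_kernel[OF this subspace_UNIV]
  show ?thesis
    using nonsingular False by (simp add: nonsingular_def centralizer_def)
qed

lemma nonsingular_radical_subset_lie_center:
  fixes br :: "'a::real_inner \<Rightarrow> 'a \<Rightarrow> 'a"
  assumes "nonsingular br" "w \<in> lie_center br" "w \<noteq> 0" "\<forall>W. w \<bullet> br V W = 0"
  shows "V \<in> lie_center br"
proof (rule ccontr)
  assume "V \<notin> lie_center br"
  then obtain W where "w = br V W"
    using assms(1,2) by (auto simp: nonsingular_def)
  then have "w \<bullet> w = 0"
    using assms(4) by simp
  with assms(3) show False by simp
qed

lemma lie_center_subset_span_centralizer_brackets:
  fixes br :: "'a::euclidean_space \<Rightarrow> 'a \<Rightarrow> 'a"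
  assumes nilpotent: "two_step_nilpotent br" and nonsingular: "nonsingular br"
    and dim: "DIM('a) > 3 * dim (lie_center br)"
  shows "lie_center br \<subseteq> span {br V V' | V V'. V \<in> centralizer br U \<and> V' \<in> centralizer br U}"
    (is "?\<zz> \<subseteq> span ?S")
proof (rule ccontr)
  assume not_spanned: "\<not> ?\<zz> \<subseteq> span ?S"
  have br: "bilinear br"
    using nilpotent by (simp add: two_step_nilpotent_def lie_algebra_def)
  have \<zz>: "subspace ?\<zz>"
    using br by (rule subspace_lie_center)
  have "?S \<subseteq> ?\<zz>"
    using nilpotent by (auto simp: two_step_nilpotent_def lie_center_def)
  then have "span ?S \<subseteq> ?\<zz>"
    using \<zz> by (rule span_minimal)
  moreover have span_\<zz>: "span ?\<zz> = ?\<zz>"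
    using \<zz> by (simp add: span_eq_iff)
  ultimately have "span ?S \<subset> span ?\<zz>"
    using not_spanned by blast
  then obtain w where "w \<noteq> 0" "w \<in> span ?\<zz>"
    and w_orth: "\<And>y. y \<in> span ?S \<Longrightarrow> orthogonal w y"
    by (rule orthogonal_to_subspace_exists_gen) blast
  then have w: "w \<noteq> 0" "w \<in> ?\<zz>"
    using span_\<zz> by simp_all
  define f where "f V W = w \<bullet> br V W" for V W
  have f: "bilinear f"
    using br unfolding f_def bilinear_def linear_iff
    by (simp add: bilinear_ladd bilinear_radd bilinear_lmul bilinear_rmul inner_add_right)
  have "f V V' = 0" if "V \<in> centralizer br U" "V' \<in> centralizer br U" for V V'
    using w_orth[OF span_base] that by (auto simp: f_def orthogonal_def)
  then have "2 * dim (centralizer br U) \<le> DIM('a) + dim {V \<in> centralizer br U. \<forall>W. f V W = 0}"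
    by (intro dim_isotropic_subspace_le f subspace_centralizer br)
  moreover have "{V \<in> centralizer br U. \<forall>W. f V W = 0} \<subseteq> ?\<zz>"
    using nonsingular_radical_subset_lie_center[OF nonsingular w(2,1)] by (auto simp: f_def)
  then have "dim {V \<in> centralizer br U. \<forall>W. f V W = 0} \<le> dim ?\<zz>"
    by (rule dim_subset)
  moreover have "DIM('a) \<le> dim ?\<zz> + dim (centralizer br U)"
    using br nonsingular by (rule dim_centralizer_ge)
  ultimately show False
    using dim by linarith
qed

lemma closed_form_centralizer_bracket:
  assumes "lie_algebra br" "two_form \<omega>" "closed_form br \<omega>"
    and "V \<in> centralizer br U" "V' \<in> centralizer br U"
  shows "\<omega> (br V V') U = 0"
proof -
  have "\<omega> (br V V') U + \<omega> (br V' U) V + \<omega> (br U V) V' = 0"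
    using assms(3) by (simp add: closed_form_def)
  moreover have "br U V = 0" "br V' U = 0"
    using assms(4,5) lie_bracket_antisym[OF assms(1), of U V'] by (simp_all add: centralizer_def)
  ultimately show ?thesis
    using assms(2) by (simp add: two_form_def bilinear_lzero)
qed

theorem mainTheorem2:
  fixes br :: "'a::euclidean_space \<Rightarrow> 'a \<Rightarrow> 'a"
    and \<omega> :: "'a \<Rightarrow> 'a \<Rightarrow> real"
  assumes "two_step_nilpotent br"
    and "nonsingular br"
    and "DIM('a) > 3 * dim (lie_center br)"
    and "two_form \<omega>"
    and "closed_form br \<omega>"
  shows "\<forall>Z \<in> lie_center br. \<forall>U. \<omega> Z U = 0"
proof (intro ballI allI)
  fix Z U assume "Z \<in> lie_center br"
  then have Z: "Z \<in> span {br V V' | V V'. V \<in> centralizer br U \<and> V' \<in> centralizer br U}"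
    using lie_center_subset_span_centralizer_brackets assms(1-3) by blast
  have "linear (\<lambda>X. \<omega> X U)"
    using assms(4) by (simp add: two_form_def bilinear_def)
  moreover have "lie_algebra br"
    using assms(1) by (simp add: two_step_nilpotent_def)
  ultimately show "\<omega> Z U = 0"
    using linear_eq_0_on_span[OF _ _ Z] closed_form_centralizer_bracket assms(4,5) by blast
qed

end
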